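(* For each $k\ge1$ there is a cone complex $\mathcal{S}_k$ in $M_{\mathbb{R}}$ whose support $\bigcup_{\sigma\in\mathcal{S}_k}\sigma$ equals \[\mathcal{W}_k=\{\theta\in M_{\mathbb{R}}:\text{there exists a nonzero }\theta\text{-semistable object }E\in\mathcal{A}\text{ of total dimension}\le k\}.\] In particular $\mathcal{W}_k$ is closed.
   Context: $Q$ is a quiver (finite vertex set $V(Q)$, finite arrow set), $\mathbb{C}Q$ its path algebra, $I\subset\mathbb{C}Q$ a two-sided ideal spanned by linear combinations of paths of length $\ge2$, and $\mathcal{A}=\mathrm{rep}(Q,I)$ the abelian category of finite-dimensional left $\mathbb{C}Q/I$-modules. $N=\mathbb{Z}^{V(Q)}$ with basis $(e_i)$; each $E\in\mathcal{A}$ has a dimension vector $d(E)\in N$; $M=\mathrm{Hom}(N,\mathbb{Z})$, $M_{\mathbb{R}}=M\otimes\mathbb{R}$, and for $\theta\in M_{\mathbb{R}}$ write $\theta(E)=\theta(d(E))$. The total dimension of $E$ is $\dim_{\mathbb{C}}E$. An object $E$ is $\theta$-semistable if $\theta(E)=0$ and every subobject $A\subset E$ satisfies $\theta(A)\le0$. A cone is a convex rational polyhedral cone $\{\sum\lambda_im_i:\lambda_i\ge0\}$ ($m_i\in M$); a face of $\sigma$ is $\sigma\cap n^\perp$ for $n\in N$ with $\theta(n)\ge0$ on $\sigma$; a cone complex is a finite collection of cones closed under taking faces and such that any two intersect in a face of each. *)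

theory Defs
  imports "Jordan_Normal_Form.Matrix" "HOL-Analysis.Function_Topology"
begin

text \<open>A path is a pair (start vertex, list of arrows),
arrows listed in the order in which they are traversed; the trivial path at i is (i, []).\<close>

definition vpath :: "'a set \<Rightarrow> ('a \<Rightarrow> 'v) \<Rightarrow> ('a \<Rightarrow> 'v) \<Rightarrow> 'v \<times> 'a list \<Rightarrow> bool" where
  "vpath Arr src tgt p \<longleftrightarrow> set (snd p) \<subseteq> Arr \<and>
     (snd p \<noteq> [] \<longrightarrow> src (hd (snd p)) = fst p \<and>
        (\<forall>k. Suc k < length (snd p) \<longrightarrow> tgt (snd p ! k) = src (snd p ! Suc k)))"

definition pend :: "('a \<Rightarrow> 'v) \<Rightarrow> 'v \<times> 'a list \<Rightarrow> 'v" where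
  "pend tgt p = (if snd p = [] then fst p else tgt (last (snd p)))"

text \<open>Concatenation: first p, then q (None = product is zero in the path algebra).\<close>
definition pcomp :: "('a \<Rightarrow> 'v) \<Rightarrow> 'v \<times> 'a list \<Rightarrow> 'v \<times> 'a list \<Rightarrow> ('v \<times> 'a list) option" where
  "pcomp tgt p q = (if pend tgt p = fst q then Some (fst p, snd p @ snd q) else None)"

text \<open>Elements of the path algebra CQ: finitely supported C-linear combinations of paths.\<close>
definition path_alg :: "'a set \<Rightarrow> ('a \<Rightarrow> 'v) \<Rightarrow> ('a \<Rightarrow> 'v) \<Rightarrow> ('v \<times> 'a list \<Rightarrow> complex) set" where
  "path_alg Arr src tgt = {x. finite {p. x p \<noteq> 0} \<and> (\<forall>p. x p \<noteq> 0 \<longrightarrow> vpath Arr src tgt p)}"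

definition rmul :: "('a \<Rightarrow> 'v) \<Rightarrow> ('v \<times> 'a list \<Rightarrow> complex) \<Rightarrow> 'v \<times> 'a list \<Rightarrow> ('v \<times> 'a list \<Rightarrow> complex)" where
  "rmul tgt x q = (\<lambda>w. \<Sum>u\<in>{u. x u \<noteq> 0}. if pcomp tgt u q = Some w then x u else 0)"

definition lmul :: "('a \<Rightarrow> 'v) \<Rightarrow> 'v \<times> 'a list \<Rightarrow> ('v \<times> 'a list \<Rightarrow> complex) \<Rightarrow> ('v \<times> 'a list \<Rightarrow> complex)" where
  "lmul tgt q x = (\<lambda>w. \<Sum>u\<in>{u. x u \<noteq> 0}. if pcomp tgt q u = Some w then x u else 0)"

text \<open>I is a two-sided ideal of CQ (closure under multiplication by basis paths on both
sides together with linearity gives closure under multiplication by all of CQ),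
spanned by linear combinations of paths of length at least 2.\<close>
definition admissible_ideal :: "'a set \<Rightarrow> ('a \<Rightarrow> 'v) \<Rightarrow> ('a \<Rightarrow> 'v) \<Rightarrow> ('v \<times> 'a list \<Rightarrow> complex) set \<Rightarrow> bool" where
  "admissible_ideal Arr src tgt I \<longleftrightarrow>
     I \<subseteq> path_alg Arr src tgt \<and> (\<lambda>_. 0) \<in> I \<and>
     (\<forall>x\<in>I. \<forall>y\<in>I. (\<lambda>p. x p + y p) \<in> I) \<and>
     (\<forall>x\<in>I. \<forall>c. (\<lambda>p. c * x p) \<in> I) \<and>
     (\<forall>x\<in>I. \<forall>q. vpath Arr src tgt q \<longrightarrow> rmul tgt x q \<in> I \<and> lmul tgt q x \<in> I) \<and>
     (\<forall>x\<in>I. \<forall>p. x p \<noteq> 0 \<longrightarrow> 2 \<le> length (snd p))"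

record ('v, 'a) qrep =
  dv :: "'v \<Rightarrow> nat"
  mp :: "'a \<Rightarrow> complex mat"

definition is_rep :: "'a set \<Rightarrow> ('a \<Rightarrow> 'v) \<Rightarrow> ('a \<Rightarrow> 'v) \<Rightarrow> ('v, 'a) qrep \<Rightarrow> bool" where
  "is_rep Arr src tgt E \<longleftrightarrow> (\<forall>a\<in>Arr. mp E a \<in> carrier_mat (dv E (tgt a)) (dv E (src a)))"

text \<open>The linear map of a path (first arrow applied first).\<close>
definition peval :: "('v, 'a) qrep \<Rightarrow> 'v \<times> 'a list \<Rightarrow> complex mat" where
  "peval E p = foldl (\<lambda>M a. mp E a * M) (1\<^sub>m (dv E (fst p))) (snd p)"

text \<open>Every element of I acts as zero; written blockwise (component e_j x e_i), entrywise.\<close>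
definition satisfies :: "'a set \<Rightarrow> ('a \<Rightarrow> 'v) \<Rightarrow> ('a \<Rightarrow> 'v) \<Rightarrow> ('v \<times> 'a list \<Rightarrow> complex) set
     \<Rightarrow> ('v, 'a) qrep \<Rightarrow> bool" where
  "satisfies Arr src tgt I E \<longleftrightarrow>
     (\<forall>x\<in>I. \<forall>i j. \<forall>r c. r < dv E j \<longrightarrow> c < dv E i \<longrightarrow>
        (\<Sum>p\<in>{p. x p \<noteq> 0 \<and> fst p = i \<and> pend tgt p = j}. x p * peval E p $$ (r, c)) = 0)"

definition objA :: "'a set \<Rightarrow> ('a \<Rightarrow> 'v) \<Rightarrow> ('a \<Rightarrow> 'v) \<Rightarrow> ('v \<times> 'a list \<Rightarrow> complex) set
     \<Rightarrow> ('v, 'a) qrep \<Rightarrow> bool" where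
  "objA Arr src tgt I E \<longleftrightarrow> is_rep Arr src tgt E \<and> satisfies Arr src tgt I E"

definition is_mor :: "'a set \<Rightarrow> ('a \<Rightarrow> 'v) \<Rightarrow> ('a \<Rightarrow> 'v) \<Rightarrow> ('v, 'a) qrep \<Rightarrow> ('v, 'a) qrep
     \<Rightarrow> ('v \<Rightarrow> complex mat) \<Rightarrow> bool" where
  "is_mor Arr src tgt A E f \<longleftrightarrow>
     (\<forall>i. f i \<in> carrier_mat (dv E i) (dv A i)) \<and>
     (\<forall>a\<in>Arr. f (tgt a) * mp A a = mp E a * f (src a))"

definition injective_mor :: "('v, 'a) qrep \<Rightarrow> ('v, 'a) qrep \<Rightarrow> ('v \<Rightarrow> complex mat) \<Rightarrow> bool" where
  "injective_mor A E f \<longleftrightarrow>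
     (\<forall>i. \<forall>v\<in>carrier_vec (dv A i). f i *\<^sub>v v = 0\<^sub>v (dv E i) \<longrightarrow> v = 0\<^sub>v (dv A i))"

definition subobj :: "'a set \<Rightarrow> ('a \<Rightarrow> 'v) \<Rightarrow> ('a \<Rightarrow> 'v) \<Rightarrow> ('v \<times> 'a list \<Rightarrow> complex) set
     \<Rightarrow> ('v, 'a) qrep \<Rightarrow> ('v, 'a) qrep \<Rightarrow> bool" where
  "subobj Arr src tgt I A E \<longleftrightarrow> objA Arr src tgt I A \<and>
     (\<exists>f. is_mor Arr src tgt A E f \<and> injective_mor A E f)"

text \<open>M_R = real-valued functions on vertices; theta(n) for n in N.\<close>
definition pair :: "('v::finite \<Rightarrow> real) \<Rightarrow> ('v \<Rightarrow> real) \<Rightarrow> real" where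
  "pair \<theta> n = (\<Sum>i\<in>UNIV. \<theta> i * n i)"

definition total_dim :: "('v::finite, 'a) qrep \<Rightarrow> nat" where
  "total_dim E = (\<Sum>i\<in>UNIV. dv E i)"

definition semistable :: "'a set \<Rightarrow> ('a \<Rightarrow> 'v::finite) \<Rightarrow> ('a \<Rightarrow> 'v) \<Rightarrow> ('v \<times> 'a list \<Rightarrow> complex) set
     \<Rightarrow> ('v \<Rightarrow> real) \<Rightarrow> ('v, 'a) qrep \<Rightarrow> bool" where
  "semistable Arr src tgt I \<theta> E \<longleftrightarrow>
     pair \<theta> (\<lambda>i. real (dv E i)) = 0 \<and>
     (\<forall>A. subobj Arr src tgt I A E \<longrightarrow> pair \<theta> (\<lambda>i. real (dv A i)) \<le> 0)"

definition wall_set :: "'a set \<Rightarrow> ('a \<Rightarrow> 'v::finite) \<Rightarrow> ('a \<Rightarrow> 'v) \<Rightarrow> ('v \<times> 'a list \<Rightarrow> complex) set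
     \<Rightarrow> nat \<Rightarrow> ('v \<Rightarrow> real) set" where
  "wall_set Arr src tgt I k = {\<theta>. \<exists>E::('v,'a) qrep. objA Arr src tgt I E \<and> total_dim E \<noteq> 0 \<and>
       total_dim E \<le> k \<and> semistable Arr src tgt I \<theta> E}"

definition rat_cone :: "('v::finite \<Rightarrow> real) set \<Rightarrow> bool" where
  "rat_cone \<sigma> \<longleftrightarrow> (\<exists>G. finite G \<and> (\<forall>g\<in>G. \<forall>i. g i \<in> \<int>) \<and>
      \<sigma> = {(\<lambda>i. \<Sum>g\<in>G. c g * g i) | c. \<forall>g\<in>G. 0 \<le> c g})"

definition is_face :: "('v::finite \<Rightarrow> real) set \<Rightarrow> ('v \<Rightarrow> real) set \<Rightarrow> bool" where
  "is_face \<tau> \<sigma> \<longleftrightarrow> (\<exists>n::'v \<Rightarrow> int. (\<forall>\<theta>\<in>\<sigma>. 0 \<le> pair \<theta> (\<lambda>i. real_of_int (n i))) \<and>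
      \<tau> = \<sigma> \<inter> {\<theta>. pair \<theta> (\<lambda>i. real_of_int (n i)) = 0})"

definition cone_complex :: "('v::finite \<Rightarrow> real) set set \<Rightarrow> bool" where
  "cone_complex S \<longleftrightarrow> finite S \<and> (\<forall>\<sigma>\<in>S. rat_cone \<sigma>) \<and>
     (\<forall>\<sigma>\<in>S. \<forall>\<tau>. is_face \<tau> \<sigma> \<longrightarrow> \<tau> \<in> S) \<and>
     (\<forall>\<sigma>\<in>S. \<forall>\<tau>\<in>S. is_face (\<sigma> \<inter> \<tau>) \<sigma> \<and> is_face (\<sigma> \<inter> \<tau>) \<tau>)"

end

theory Submission
  imports Defs "Jordan_Normal_Form.Determinant"
begin

text \<open>
  Whether \<open>E\<close> is \<open>\<theta>\<close>-semistable depends only on the signs of \<open>\<theta>\<close> on the dimension vectors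
  of \<open>E\<close> and of its subobjects. A subobject embeds vertexwise, so for total dimension at most \<open>k\<close>
  all these vectors lie in the box \<open>[0, k]\<^sup>V\<close>. Hence \<open>W\<^sub>k\<close> is a union of closed cells of the
  arrangement of the finitely many hyperplanes \<open>n\<^sup>\<bottom>\<close>, \<open>n \<in> [0, k]\<^sup>V\<close>; the cell of \<open>\<theta>\<^sub>0\<close> consists
  of the \<open>\<theta>\<close> having the same weak signs as \<open>\<theta>\<^sub>0\<close> on the box. Each cell is a polyhedral cone,
  hence generated by finitely many integer vectors (Fourier--Motzkin elimination), and two cells
  meet in a common face. So the faces of the finitely many cells meeting \<open>W\<^sub>k\<close> form a cone
  complex with support \<open>W\<^sub>k\<close>, which is closed as a finite union of closed cells.
\<close>

abbreviation ipair :: "('v::finite \<Rightarrow> real) \<Rightarrow> ('v \<Rightarrow> int) \<Rightarrow> real" where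
  "ipair \<theta> n \<equiv> pair \<theta> (\<lambda>i. real_of_int (n i))"

lemma pair_add_left: "pair (\<lambda>i. x i + y i) n = pair x n + pair y n"
  unfolding pair_def by (simp add: algebra_simps sum.distrib)

lemma pair_diff_left: "pair (\<lambda>i. x i - y i) n = pair x n - pair y n"
  unfolding pair_def by (simp add: algebra_simps sum_subtractf)

lemma pair_scale_left: "pair (\<lambda>i. a * x i) n = a * pair x n"
  unfolding pair_def by (simp add: sum_distrib_left algebra_simps)

lemma pair_sum_left: "pair (\<lambda>i. \<Sum>a\<in>A. f a i) n = (\<Sum>a\<in>A. pair (f a) n)"
  unfolding pair_def by (simp add: sum_distrib_right sum.swap[of _ A])

lemma pair_zero_left [simp]: "pair (\<lambda>i. 0) n = 0"
  unfolding pair_def by simp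

lemma pair_add_right: "pair \<theta> (\<lambda>i. n i + m i) = pair \<theta> n + pair \<theta> m"
  unfolding pair_def by (simp add: algebra_simps sum.distrib)

lemma pair_scale_right: "pair \<theta> (\<lambda>i. a * n i) = a * pair \<theta> n"
  unfolding pair_def by (simp add: sum_distrib_left algebra_simps)

lemma pair_uminus_right: "pair \<theta> (\<lambda>i. - n i) = - pair \<theta> n"
  unfolding pair_def by (simp add: sum_negf)

lemma pair_sum_right: "pair \<theta> (\<lambda>i. \<Sum>a\<in>A. f a i) = (\<Sum>a\<in>A. pair \<theta> (f a))"
  unfolding pair_def by (simp add: sum_distrib_left sum.swap[of _ A])

lemma uminus_uminus_fun [simp]: "- (- n) = (n :: 'v \<Rightarrow> 'b::group_add)"
  by (simp add: fun_eq_iff)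

lemma ipair_Ints: "(\<forall>i. g i \<in> \<int>) \<Longrightarrow> ipair g n \<in> \<int>"
  unfolding pair_def by (intro Ints_sum Ints_mult) auto

lemma continuous_on_pair: "continuous_on UNIV (\<lambda>\<theta>. pair \<theta> n)"
  unfolding pair_def by (intro continuous_intros) auto

definition is_cone :: "('v \<Rightarrow> real) set \<Rightarrow> bool" where
  "is_cone C \<longleftrightarrow> (\<lambda>i. 0) \<in> C \<and> (\<forall>x\<in>C. \<forall>y\<in>C. (\<lambda>i. x i + y i) \<in> C) \<and>
     (\<forall>x\<in>C. \<forall>a::real. 0 \<le> a \<longrightarrow> (\<lambda>i. a * x i) \<in> C)"

definition cone_gen :: "('v \<Rightarrow> real) set \<Rightarrow> ('v \<Rightarrow> real) set" where
  "cone_gen G = {(\<lambda>i. \<Sum>g\<in>G. c g * g i) | c. \<forall>g\<in>G. 0 \<le> c g}"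

lemma is_cone_add: "is_cone C \<Longrightarrow> x \<in> C \<Longrightarrow> y \<in> C \<Longrightarrow> (\<lambda>i. x i + y i) \<in> C"
  unfolding is_cone_def by blast

lemma is_cone_scale: "is_cone C \<Longrightarrow> x \<in> C \<Longrightarrow> 0 \<le> a \<Longrightarrow> (\<lambda>i. a * x i) \<in> C"
  unfolding is_cone_def by blast

lemma is_cone_sum:
  assumes "is_cone C" "\<forall>a\<in>A. f a \<in> C"
  shows "(\<lambda>i. \<Sum>a\<in>A. f a i) \<in> C"
proof (cases "finite A")
  case True
  then show ?thesis using assms(2)
    by (induction A rule: finite_induct) (use assms(1) in \<open>auto simp: is_cone_def\<close>)
next
  case False
  then show ?thesis using assms(1) by (simp add: is_cone_def)
qed

lemma is_cone_Int: "is_cone A \<Longrightarrow> is_cone B \<Longrightarrow> is_cone (A \<inter> B)"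
  unfolding is_cone_def by blast

lemma is_cone_halfspace: "is_cone {\<theta>. 0 \<le> pair \<theta> n}"
  unfolding is_cone_def by (simp add: pair_add_left pair_scale_left)

lemma is_cone_hyperplane: "is_cone {\<theta>. pair \<theta> n = 0}"
  unfolding is_cone_def by (simp add: pair_add_left pair_scale_left)

lemma is_cone_cone_gen: "is_cone (cone_gen G)"
  unfolding is_cone_def cone_gen_def
proof (intro conjI ballI allI impI)
  show "(\<lambda>i. 0) \<in> {\<lambda>i. \<Sum>g\<in>G. c g * g i |c. \<forall>g\<in>G. 0 \<le> c g}"
    by (intro CollectI exI[of _ "\<lambda>_. 0"]) simp
next
  fix x y assume "x \<in> {\<lambda>i. \<Sum>g\<in>G. c g * g i |c. \<forall>g\<in>G. 0 \<le> c g}"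
    and "y \<in> {\<lambda>i. \<Sum>g\<in>G. c g * g i |c. \<forall>g\<in>G. 0 \<le> c g}"
  then obtain c d where "x = (\<lambda>i. \<Sum>g\<in>G. c g * g i)" "\<forall>g\<in>G. 0 \<le> c g"
    and "y = (\<lambda>i. \<Sum>g\<in>G. d g * g i)" "\<forall>g\<in>G. 0 \<le> d g" by blast
  then show "(\<lambda>i. x i + y i) \<in> {\<lambda>i. \<Sum>g\<in>G. c g * g i |c. \<forall>g\<in>G. 0 \<le> c g}"
    by (intro CollectI exI[of _ "\<lambda>g. c g + d g"]) (auto simp: sum.distrib algebra_simps)
next
  fix x and a :: real assume "x \<in> {\<lambda>i. \<Sum>g\<in>G. c g * g i |c. \<forall>g\<in>G. 0 \<le> c g}" "0 \<le> a"
  then obtain c where "x = (\<lambda>i. \<Sum>g\<in>G. c g * g i)" "\<forall>g\<in>G. 0 \<le> c g" "0 \<le> a" by blast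
  then show "(\<lambda>i. a * x i) \<in> {\<lambda>i. \<Sum>g\<in>G. c g * g i |c. \<forall>g\<in>G. 0 \<le> c g}"
    by (intro CollectI exI[of _ "\<lambda>g. a * c g"]) (auto simp: sum_distrib_left algebra_simps)
qed

lemma gen_in_cone_gen:
  assumes "finite G" "g \<in> G"
  shows "g \<in> cone_gen G"
proof -
  have "(\<lambda>i. \<Sum>h\<in>G. (if h = g then 1 else 0) * h i) = g"
    using assms by (intro ext) (simp add: if_distrib[of "\<lambda>c. c * _"] cong: if_cong)
  then show ?thesis unfolding cone_gen_def
    by (intro CollectI exI[of _ "\<lambda>h. if h = g then 1 else 0"]) auto
qed

lemma cone_gen_least:
  assumes "G \<subseteq> C" "is_cone C"
  shows "cone_gen G \<subseteq> C"
proof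
  fix x assume "x \<in> cone_gen G"
  then obtain c where c: "x = (\<lambda>i. \<Sum>g\<in>G. c g * g i)" "\<forall>g\<in>G. 0 \<le> c g"
    unfolding cone_gen_def by blast
  then have "\<forall>g\<in>G. (\<lambda>i. c g * g i) \<in> C" using assms is_cone_scale by blast
  from is_cone_sum[OF assms(2) this] show "x \<in> C" using c(1) by simp
qed

lemma pair_cone_gen: "pair (\<lambda>i. \<Sum>g\<in>G. c g * g i) n = (\<Sum>g\<in>G. c g * pair g n)"
  by (simp add: pair_sum_left pair_scale_left)

lemma rat_cone_iff_cone_gen:
  "rat_cone \<sigma> \<longleftrightarrow> (\<exists>G. finite G \<and> (\<forall>g\<in>G. \<forall>i. g i \<in> \<int>) \<and> \<sigma> = cone_gen G)"
  by (simp add: rat_cone_def cone_gen_def)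

lemma rat_coneE:
  assumes "rat_cone \<sigma>"
  obtains G where "finite G" "\<forall>g\<in>G. \<forall>i. g i \<in> \<int>" "\<sigma> = cone_gen G"
  using assms unfolding rat_cone_iff_cone_gen by blast

lemma rat_coneI: "finite G \<Longrightarrow> \<forall>g\<in>G. \<forall>i. g i \<in> \<int> \<Longrightarrow> rat_cone (cone_gen G)"
  unfolding rat_cone_iff_cone_gen by blast

lemma cone_gen_subset_halfspace: "\<forall>g\<in>G. 0 \<le> pair g n \<Longrightarrow> cone_gen G \<subseteq> {\<theta>. 0 \<le> pair \<theta> n}"
  by (rule cone_gen_least[OF _ is_cone_halfspace]) blast

lemma cone_gen_Int_hyperplane:
  assumes fin: "finite G" and nonneg: "\<forall>g\<in>G. 0 \<le> pair g n"
  shows "cone_gen G \<inter> {\<theta>. pair \<theta> n = 0} = cone_gen {g\<in>G. pair g n = 0}"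
proof
  show "cone_gen G \<inter> {\<theta>. pair \<theta> n = 0} \<subseteq> cone_gen {g\<in>G. pair g n = 0}"
  proof
    fix \<theta> assume \<theta>: "\<theta> \<in> cone_gen G \<inter> {\<theta>. pair \<theta> n = 0}"
    then obtain c where c: "\<theta> = (\<lambda>i. \<Sum>g\<in>G. c g * g i)" "\<forall>g\<in>G. 0 \<le> c g"
      unfolding cone_gen_def by blast
    have "(\<Sum>g\<in>G. c g * pair g n) = 0"
      using \<theta> by (simp add: c(1) pair_cone_gen)
    then have "\<forall>g\<in>G. c g * pair g n = 0"
      by (subst (asm) sum_nonneg_eq_0_iff[OF fin]) (use c(2) nonneg in auto)
    then have "\<forall>g\<in>G - {g\<in>G. pair g n = 0}. c g = 0" by auto
    then have "\<theta> = (\<lambda>i. \<Sum>g\<in>{g\<in>G. pair g n = 0}. c g * g i)"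
      unfolding c(1) by (intro ext sum.mono_neutral_right[OF fin]) auto
    then show "\<theta> \<in> cone_gen {g\<in>G. pair g n = 0}"
      using c(2) unfolding cone_gen_def by auto
  qed
  show "cone_gen {g\<in>G. pair g n = 0} \<subseteq> cone_gen G \<inter> {\<theta>. pair \<theta> n = 0}"
    by (rule cone_gen_least)
       (use gen_in_cone_gen[OF fin] in \<open>auto intro: is_cone_Int is_cone_cone_gen is_cone_hyperplane\<close>)
qed

lemma face_cone_genI:
  assumes "finite G" "\<forall>g\<in>G. 0 \<le> ipair g m"
  shows "is_face (cone_gen {g\<in>G. ipair g m = 0}) (cone_gen G)"
  unfolding is_face_def
  using cone_gen_subset_halfspace[OF assms(2)] cone_gen_Int_hyperplane[OF assms] by blast

lemma face_cone_genE:
  assumes fin: "finite G" and "is_face \<tau> (cone_gen G)"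
  obtains m where "\<forall>g\<in>G. 0 \<le> ipair g m" "\<tau> = cone_gen {g\<in>G. ipair g m = 0}"
proof -
  obtain m where m: "\<forall>\<theta>\<in>cone_gen G. 0 \<le> ipair \<theta> m" "\<tau> = cone_gen G \<inter> {\<theta>. ipair \<theta> m = 0}"
    using assms(2) unfolding is_face_def by blast
  then have "\<forall>g\<in>G. 0 \<le> ipair g m" using gen_in_cone_gen[OF fin] by blast
  with m(2) cone_gen_Int_hyperplane[OF fin] that show thesis by simp
qed

lemma rat_cone_face:
  assumes "rat_cone \<sigma>" "is_face \<tau> \<sigma>"
  shows "rat_cone \<tau>"
proof -
  obtain G where G: "finite G" "\<forall>g\<in>G. \<forall>i. g i \<in> \<int>" "\<sigma> = cone_gen G"
    using assms(1) by (rule rat_coneE)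
  obtain m where "\<tau> = cone_gen {g\<in>G. ipair g m = 0}"
    using face_cone_genE[OF G(1)] assms(2) G(3) by blast
  then show ?thesis using G(1,2) by (simp add: rat_coneI)
qed

lemma finite_faces:
  assumes "rat_cone \<sigma>"
  shows "finite {\<tau>. is_face \<tau> \<sigma>}"
proof -
  obtain G where G: "finite G" "\<sigma> = cone_gen G"
    using assms by (rule rat_coneE)
  have "{\<tau>. is_face \<tau> \<sigma>} \<subseteq> cone_gen ` Pow G"
  proof
    fix \<tau> assume "\<tau> \<in> {\<tau>. is_face \<tau> \<sigma>}"
    then obtain m where "\<tau> = cone_gen {g\<in>G. ipair g m = 0}"
      using face_cone_genE[OF G(1)] G(2) by blast
    then show "\<tau> \<in> cone_gen ` Pow G" by blast
  qed
  then show ?thesis using G(1) finite_subset by blast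
qed

lemma face_refl: "is_face \<sigma> \<sigma>"
  unfolding is_face_def by (intro exI[of _ "\<lambda>_. 0"]) (simp add: pair_def)

lemma face_subset: "is_face \<tau> \<sigma> \<Longrightarrow> \<tau> \<subseteq> \<sigma>"
  unfolding is_face_def by blast

lemma face_Int:
  assumes "is_face \<tau>\<^sub>1 \<sigma>" "is_face \<tau>\<^sub>2 \<sigma>"
  shows "is_face (\<tau>\<^sub>1 \<inter> \<tau>\<^sub>2) \<sigma>"
proof -
  obtain n\<^sub>1 n\<^sub>2 where
    n: "\<forall>\<theta>\<in>\<sigma>. 0 \<le> ipair \<theta> n\<^sub>1" "\<tau>\<^sub>1 = \<sigma> \<inter> {\<theta>. ipair \<theta> n\<^sub>1 = 0}"
       "\<forall>\<theta>\<in>\<sigma>. 0 \<le> ipair \<theta> n\<^sub>2" "\<tau>\<^sub>2 = \<sigma> \<inter> {\<theta>. ipair \<theta> n\<^sub>2 = 0}"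
    using assms unfolding is_face_def by blast
  have "\<forall>\<theta>\<in>\<sigma>. 0 \<le> ipair \<theta> (\<lambda>i. n\<^sub>1 i + n\<^sub>2 i)"
    using n by (simp add: pair_add_right)
  moreover have "\<tau>\<^sub>1 \<inter> \<tau>\<^sub>2 = \<sigma> \<inter> {\<theta>. ipair \<theta> (\<lambda>i. n\<^sub>1 i + n\<^sub>2 i) = 0}"
    using n by (auto simp: pair_add_right add_nonneg_eq_0_iff)
  ultimately show ?thesis
    unfolding is_face_def by (intro exI[of _ "\<lambda>i. n\<^sub>1 i + n\<^sub>2 i"] conjI)
qed

lemma face_of_subset:
  assumes "is_face \<rho> \<sigma>" "\<rho> \<subseteq> \<tau>" "\<tau> \<subseteq> \<sigma>"
  shows "is_face \<rho> \<tau>"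
  using assms unfolding is_face_def by blast

lemma int_multiple_dominates:
  fixes a b :: "'g \<Rightarrow> real"
  assumes "finite G" "\<forall>g\<in>G. a g \<in> \<int>"
  obtains L :: int where "\<forall>g\<in>G. 0 < a g \<longrightarrow> 0 < b g + of_int L * a g"
proof
  define S where "S = (\<Sum>g\<in>G. \<bar>b g\<bar>)"
  define L where "L = \<lceil>S\<rceil> + 1"
  have "S \<le> of_int \<lceil>S\<rceil>" by (rule le_of_int_ceiling)
  then have "S < of_int L"
    unfolding L_def by linarith
  moreover have "0 \<le> S"
    unfolding S_def by (rule sum_nonneg) simp
  ultimately have L: "S < of_int L" "0 \<le> real_of_int L" by simp_all
  show "\<forall>g\<in>G. 0 < a g \<longrightarrow> 0 < b g + of_int L * a g"
  proof (intro ballI impI)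
    fix g assume g: "g \<in> G" "0 < a g"
    have "1 \<le> a g" using g assms(2) by (auto elim!: Ints_cases)
    then have "of_int L * 1 \<le> of_int L * a g"
      using L(2) by (rule mult_left_mono)
    moreover have "\<bar>b g\<bar> \<le> S"
      unfolding S_def using g(1) assms(1) by (intro member_le_sum) auto
    ultimately show "0 < b g + of_int L * a g"
      using L(1) by linarith
  qed
qed

text \<open>A face \<open>m' = 0\<close> of the face \<open>m = 0\<close> is cut out directly by \<open>m' + L m\<close> for large \<open>L\<close>;
  integrality of the generators makes \<open>m\<close> at least 1 wherever it is positive.\<close>
lemma face_trans:
  assumes "rat_cone \<sigma>" "is_face \<tau> \<sigma>" "is_face \<rho> \<tau>"
  shows "is_face \<rho> \<sigma>"
proof -
  obtain G where G: "finite G" "\<forall>g\<in>G. \<forall>i. g i \<in> \<int>" "\<sigma> = cone_gen G"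
    using assms(1) by (rule rat_coneE)
  obtain m where m: "\<forall>g\<in>G. 0 \<le> ipair g m" "\<tau> = cone_gen {g\<in>G. ipair g m = 0}"
    using face_cone_genE[OF G(1)] assms(2) G(3) by blast
  define G\<^sub>0 where "G\<^sub>0 = {g\<in>G. ipair g m = 0}"
  obtain m' where m': "\<forall>g\<in>G\<^sub>0. 0 \<le> ipair g m'" "\<rho> = cone_gen {g\<in>G\<^sub>0. ipair g m' = 0}"
    using face_cone_genE[of G\<^sub>0] G(1) assms(3) m(2) unfolding G\<^sub>0_def by auto
  have "\<forall>g\<in>G. ipair g m \<in> \<int>" using G(2) ipair_Ints by blast
  then obtain L where L: "\<forall>g\<in>G. 0 < ipair g m \<longrightarrow> 0 < ipair g m' + of_int L * ipair g m"
    by (rule int_multiple_dominates[OF G(1)])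
  define m'' where "m'' = (\<lambda>i. m' i + L * m i)"
  have m'': "ipair g m'' = ipair g m' + of_int L * ipair g m" for g
    unfolding m''_def by (simp add: pair_add_right pair_scale_right)
  have pos: "0 < ipair g m''" if "g \<in> G" "ipair g m \<noteq> 0" for g
  proof -
    have "0 < ipair g m" using that m(1) by (simp add: less_le)
    then show ?thesis using L that(1) m''[of g] by simp
  qed
  have nonneg: "\<forall>g\<in>G. 0 \<le> ipair g m''"
  proof
    fix g assume "g \<in> G"
    then show "0 \<le> ipair g m''"
      using pos[of g] m'(1) m''[of g] unfolding G\<^sub>0_def by (cases "ipair g m = 0") auto
  qed
  have "ipair g m'' = 0 \<longleftrightarrow> ipair g m = 0 \<and> ipair g m' = 0" if "g \<in> G" for g
    using pos[OF that] m''[of g] by (cases "ipair g m = 0") auto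
  then have "{g\<in>G. ipair g m'' = 0} = {g\<in>G\<^sub>0. ipair g m' = 0}"
    unfolding G\<^sub>0_def by auto
  moreover have "is_face (cone_gen {g\<in>G. ipair g m'' = 0}) (cone_gen G)"
    by (rule face_cone_genI[OF G(1) nonneg])
  ultimately show ?thesis
    unfolding G(3) m'(2) by simp
qed

subsection \<open>Fourier--Motzkin elimination\<close>

definition fm_gens :: "('v::finite \<Rightarrow> real) set \<Rightarrow> ('v \<Rightarrow> real) \<Rightarrow> ('v \<Rightarrow> real) set" where
  "fm_gens G n = {g\<in>G. 0 \<le> pair g n} \<union>
     (\<lambda>(g, h) i. pair g n * h i - pair h n * g i) ` ({g\<in>G. 0 \<le> pair g n} \<times> {h\<in>G. pair h n < 0})"

lemma fourier_motzkin_identity: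
  fixes c a x :: "'g \<Rightarrow> real"
  assumes "P = (\<Sum>g\<in>A. c g * a g)" "P \<noteq> 0"
  shows "(\<Sum>g\<in>A. c g * x g) + (\<Sum>h\<in>B. c h * x h) =
    (1 + (\<Sum>h\<in>B. c h * a h) / P) * (\<Sum>g\<in>A. c g * x g) +
    (\<Sum>g\<in>A. \<Sum>h\<in>B. (c g * c h / P) * (a g * x h - a h * x g))"
proof -
  have "(\<Sum>g\<in>A. \<Sum>h\<in>B. (c g * c h / P) * (a g * x h - a h * x g)) =
      (\<Sum>g\<in>A. \<Sum>h\<in>B. ((c g * a g) * (c h * x h) - (c g * x g) * (c h * a h)) / P)"
    by (intro sum.cong refl) (simp add: field_simps)
  also have "\<dots> = ((\<Sum>g\<in>A. c g * a g) * (\<Sum>h\<in>B. c h * x h) -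
      (\<Sum>g\<in>A. c g * x g) * (\<Sum>h\<in>B. c h * a h)) / P"
    by (simp add: sum_divide_distrib[symmetric] sum_subtractf sum_product)
  finally show ?thesis using assms by (simp add: field_simps)
qed

lemma finite_fm_gens: "finite G \<Longrightarrow> finite (fm_gens G n)"
  unfolding fm_gens_def by simp

lemma fm_gens_subset: "fm_gens G n \<subseteq> cone_gen G \<inter> {\<theta>. 0 \<le> pair \<theta> n}" if "finite G"
proof -
  have comb: "(\<lambda>i. pair g n * h i - pair h n * g i) \<in> cone_gen G \<inter> {\<theta>. 0 \<le> pair \<theta> n}"
    if "g \<in> G" "h \<in> G" "0 \<le> pair g n" "pair h n < 0" for g h
  proof -
    have "(\<lambda>i. (\<lambda>i. pair g n * h i) i + (\<lambda>i. (- pair h n) * g i) i) \<in> cone_gen G"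
      using that \<open>finite G\<close>
      by (intro is_cone_add is_cone_scale is_cone_cone_gen gen_in_cone_gen) auto
    then show ?thesis by (simp add: pair_diff_left pair_scale_left)
  qed
  then show ?thesis
    using gen_in_cone_gen[OF \<open>finite G\<close>] unfolding fm_gens_def by auto
qed

lemma cone_gen_fm_gens_nonneg_part:
  assumes "finite G" "\<forall>g\<in>G. 0 \<le> c g"
  shows "(\<lambda>i. \<Sum>g\<in>{g\<in>G. 0 \<le> pair g n}. c g * g i) \<in> cone_gen (fm_gens G n)"
  using assms
  by (intro is_cone_sum is_cone_cone_gen ballI is_cone_scale gen_in_cone_gen finite_fm_gens)
     (auto simp: fm_gens_def)

lemma cone_gen_fm_gens_mixed_part:
  assumes "finite G" "\<forall>g\<in>G. 0 \<le> c g" "0 < P"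
  shows "(\<lambda>i. \<Sum>g\<in>{g\<in>G. 0 \<le> pair g n}. \<Sum>h\<in>{h\<in>G. pair h n < 0}.
      (c g * c h / P) * (pair g n * h i - pair h n * g i)) \<in> cone_gen (fm_gens G n)"
proof (intro is_cone_sum[OF is_cone_cone_gen] ballI)
  fix g h assume g: "g \<in> {g\<in>G. 0 \<le> pair g n}" and h: "h \<in> {h\<in>G. pair h n < 0}"
  have "(\<lambda>i. pair g n * h i - pair h n * g i) \<in> fm_gens G n"
    unfolding fm_gens_def using g h by (intro UnI2 image_eqI[of _ _ "(g, h)"]) simp_all
  moreover have "0 \<le> c g * c h / P"
    using assms(2,3) g h by simp
  ultimately show "(\<lambda>i. (c g * c h / P) * (pair g n * h i - pair h n * g i)) \<in> cone_gen (fm_gens G n)"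
    using assms(1) by (intro is_cone_scale is_cone_cone_gen gen_in_cone_gen finite_fm_gens)
qed

text \<open>Split \<open>\<theta>\<close> by the sign of \<open>n\<close> on the generators. The negative part is absorbed by
  pairing every negative generator with every positive one (\<open>fourier_motzkin_identity\<close>);
  if the positive part vanishes, so does the negative part.\<close>
lemma cone_gen_Int_halfspace_subset:
  assumes fin: "finite G"
  shows "cone_gen G \<inter> {\<theta>. 0 \<le> pair \<theta> n} \<subseteq> cone_gen (fm_gens G n)"
proof
  fix \<theta> assume \<theta>: "\<theta> \<in> cone_gen G \<inter> {\<theta>. 0 \<le> pair \<theta> n}"
  then obtain c where c: "\<theta> = (\<lambda>i. \<Sum>g\<in>G. c g * g i)" "\<forall>g\<in>G. 0 \<le> c g"
    unfolding cone_gen_def by blast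
  define A where "A = {g\<in>G. 0 \<le> pair g n}"
  define B where "B = {h\<in>G. pair h n < 0}"
  define P where "P = (\<Sum>g\<in>A. c g * pair g n)"
  define N where "N = (\<Sum>h\<in>B. c h * pair h n)"
  have split: "(\<Sum>g\<in>G. f g) = (\<Sum>g\<in>A. f g) + (\<Sum>h\<in>B. f h)" for f :: "_ \<Rightarrow> real"
    using fin unfolding A_def B_def by (subst sum.union_disjoint[symmetric]) (auto intro: sum.cong)
  have \<theta>_split: "\<theta> i = (\<Sum>g\<in>A. c g * g i) + (\<Sum>h\<in>B. c h * h i)" for i
    unfolding c(1) split ..
  have A_part: "(\<lambda>i. \<Sum>g\<in>A. c g * g i) \<in> cone_gen (fm_gens G n)"
    unfolding A_def by (rule cone_gen_fm_gens_nonneg_part[OF fin c(2)])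
  have "pair \<theta> n = P + N"
    unfolding c(1) pair_cone_gen P_def N_def by (rule split)
  then have "0 \<le> P + N" using \<theta> by simp
  moreover have "0 \<le> P" "N \<le> 0"
    using c(2) unfolding P_def N_def A_def B_def
    by (auto intro!: sum_nonneg sum_nonpos simp: mult_nonneg_nonpos)
  show "\<theta> \<in> cone_gen (fm_gens G n)"
  proof (cases "P = 0")
    case True
    then have "(\<Sum>h\<in>B. - (c h * pair h n)) = 0"
      using \<open>0 \<le> P + N\<close> \<open>N \<le> 0\<close> unfolding N_def by (simp add: sum_negf)
    moreover have "\<forall>h\<in>B. 0 \<le> - (c h * pair h n)"
      using c(2) unfolding B_def by (simp add: mult_nonneg_nonpos)
    ultimately have "\<forall>h\<in>B. c h * pair h n = 0"
      using fin unfolding B_def by (subst (asm) sum_nonneg_eq_0_iff) auto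
    then have "\<forall>h\<in>B. c h = 0" unfolding B_def by simp
    then have "\<theta> = (\<lambda>i. \<Sum>g\<in>A. c g * g i)" by (intro ext) (simp add: \<theta>_split)
    with A_part show ?thesis by simp
  next
    case False
    with \<open>0 \<le> P\<close> have "0 < P" by simp
    have "1 + N / P = (P + N) / P" using \<open>0 < P\<close> by (simp add: field_simps)
    then have "0 \<le> 1 + N / P" using \<open>0 < P\<close> \<open>0 \<le> P + N\<close> by simp
    have \<theta>_eq: "\<theta> = (\<lambda>i. (1 + N / P) * (\<Sum>g\<in>A. c g * g i) +
        (\<Sum>g\<in>A. \<Sum>h\<in>B. (c g * c h / P) * (pair g n * h i - pair h n * g i)))"
      unfolding N_def by (intro ext) (simp only: \<theta>_split fourier_motzkin_identity[OF P_def False])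
    have "(\<lambda>i. (1 + N / P) * (\<Sum>g\<in>A. c g * g i)) \<in> cone_gen (fm_gens G n)"
      using \<open>0 \<le> 1 + N / P\<close> by (rule is_cone_scale[OF is_cone_cone_gen A_part])
    moreover have "(\<lambda>i. \<Sum>g\<in>A. \<Sum>h\<in>B. (c g * c h / P) * (pair g n * h i - pair h n * g i))
        \<in> cone_gen (fm_gens G n)"
      unfolding A_def B_def by (rule cone_gen_fm_gens_mixed_part[OF fin c(2) \<open>0 < P\<close>])
    ultimately show ?thesis
      unfolding \<theta>_eq by (rule is_cone_add[OF is_cone_cone_gen])
  qed
qed

lemma cone_gen_fm_gens:
  assumes "finite G"
  shows "cone_gen (fm_gens G n) = cone_gen G \<inter> {\<theta>. 0 \<le> pair \<theta> n}"
proof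
  show "cone_gen (fm_gens G n) \<subseteq> cone_gen G \<inter> {\<theta>. 0 \<le> pair \<theta> n}"
    by (rule cone_gen_least[OF fm_gens_subset[OF assms]])
       (intro is_cone_Int is_cone_cone_gen is_cone_halfspace)
  show "cone_gen G \<inter> {\<theta>. 0 \<le> pair \<theta> n} \<subseteq> cone_gen (fm_gens G n)"
    by (rule cone_gen_Int_halfspace_subset[OF assms])
qed

lemma rat_cone_Int_halfspace:
  assumes "rat_cone C"
  shows "rat_cone (C \<inter> {\<theta>. 0 \<le> ipair \<theta> n})"
proof -
  obtain G where G: "finite G" "\<forall>g\<in>G. \<forall>i. g i \<in> \<int>" "C = cone_gen G"
    using assms by (rule rat_coneE)
  have "finite (fm_gens G (\<lambda>i. real_of_int (n i)))"
    using G(1) by (rule finite_fm_gens)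
  moreover have "\<forall>g\<in>fm_gens G (\<lambda>i. real_of_int (n i)). \<forall>i. g i \<in> \<int>"
    using G(2) unfolding fm_gens_def by (auto intro!: Ints_diff Ints_mult ipair_Ints)
  ultimately show ?thesis
    using rat_coneI cone_gen_fm_gens G(1,3) by metis
qed

lemma rat_cone_UNIV: "rat_cone (UNIV :: ('v::finite \<Rightarrow> real) set)"
proof -
  define e where "e i = (\<lambda>j. if j = i then 1 else 0 :: real)" for i :: 'v
  define G where "G = range e \<union> range (\<lambda>i j. - e i j)"
  have fin: "finite G" unfolding G_def by simp
  have "\<theta> \<in> cone_gen G" for \<theta> :: "'v \<Rightarrow> real"
  proof -
    have "(\<lambda>j. \<theta> i * e i j) \<in> cone_gen G" for i
    proof (cases "0 \<le> \<theta> i")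
      case True
      then show ?thesis
        using fin unfolding G_def by (intro is_cone_scale is_cone_cone_gen gen_in_cone_gen) auto
    next
      case False
      then have "(\<lambda>j. (- \<theta> i) * (- e i j)) \<in> cone_gen G"
        using fin unfolding G_def by (intro is_cone_scale is_cone_cone_gen gen_in_cone_gen) auto
      then show ?thesis by simp
    qed
    then have "(\<lambda>j. \<Sum>i\<in>UNIV. \<theta> i * e i j) \<in> cone_gen G"
      by (intro is_cone_sum is_cone_cone_gen) auto
    moreover have "(\<lambda>j. \<Sum>i\<in>UNIV. \<theta> i * e i j) = \<theta>"
      by (intro ext) (simp add: e_def if_distrib[of "\<lambda>c. _ * c"] cong: if_cong)
    ultimately show ?thesis by simp
  qed
  moreover have "\<forall>g\<in>G. \<forall>i. g i \<in> \<int>" unfolding G_def e_def by auto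
  ultimately show ?thesis using rat_coneI[OF fin] by (metis UNIV_eq_I)
qed

definition dual_cone :: "('v::finite \<Rightarrow> int) set \<Rightarrow> ('v \<Rightarrow> real) set" where
  "dual_cone P = {\<theta>. \<forall>p\<in>P. 0 \<le> ipair \<theta> p}"

lemma rat_cone_dual_cone: "finite P \<Longrightarrow> rat_cone (dual_cone P)"
proof (induction P rule: finite_induct)
  case empty
  then show ?case using rat_cone_UNIV by (simp add: dual_cone_def)
next
  case (insert p P)
  have "dual_cone (insert p P) = dual_cone P \<inter> {\<theta>. 0 \<le> ipair \<theta> p}"
    unfolding dual_cone_def by auto
  then show ?case using rat_cone_Int_halfspace insert by simp
qed

lemma closed_dual_cone: "closed (dual_cone P)"
proof -
  have "closed {\<theta>. 0 \<le> ipair \<theta> p}" for p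
    by (rule closed_Collect_le[OF continuous_on_const continuous_on_pair])
  moreover have "dual_cone P = (\<Inter>p\<in>P. {\<theta>. 0 \<le> ipair \<theta> p})"
    unfolding dual_cone_def by auto
  ultimately show ?thesis by auto
qed

lemma face_dual_cone_Int_kernel:
  assumes "finite F" "F \<subseteq> P"
  shows "is_face (dual_cone P \<inter> {\<theta>. \<forall>p\<in>F. ipair \<theta> p = 0}) (dual_cone P)"
proof -
  define m where "m = (\<lambda>i. \<Sum>p\<in>F. p i)"
  have m: "ipair \<theta> m = (\<Sum>p\<in>F. ipair \<theta> p)" for \<theta>
    unfolding m_def by (simp add: pair_sum_right)
  have "\<forall>\<theta>\<in>dual_cone P. 0 \<le> ipair \<theta> m"
    using assms(2) unfolding m dual_cone_def by (auto intro: sum_nonneg)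
  moreover have "ipair \<theta> m = 0 \<longleftrightarrow> (\<forall>p\<in>F. ipair \<theta> p = 0)" if "\<theta> \<in> dual_cone P" for \<theta>
    unfolding m using assms(2) that
    by (subst sum_nonneg_eq_0_iff[OF assms(1)]) (auto simp: dual_cone_def)
  then have "dual_cone P \<inter> {\<theta>. \<forall>p\<in>F. ipair \<theta> p = 0} = dual_cone P \<inter> {\<theta>. ipair \<theta> m = 0}"
    by blast
  ultimately show ?thesis unfolding is_face_def by blast
qed

text \<open>The hypothesis on \<open>Q\<close> says that \<open>P\<close> and \<open>Q\<close> are defined by sign conditions on the same
  finite arrangement of hyperplanes; then \<open>Q\<close> only adds equations \<open>p = 0\<close> to \<open>P\<close>.\<close>
lemma face_dual_cone_Int:
  assumes "finite P" "Q \<subseteq> P \<union> uminus ` P"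
  shows "is_face (dual_cone P \<inter> dual_cone Q) (dual_cone P)"
proof -
  define F where "F = {p\<in>P. - p \<in> Q}"
  have "finite F" "F \<subseteq> P"
    using assms(1) unfolding F_def by auto
  then have face: "is_face (dual_cone P \<inter> {\<theta>. \<forall>p\<in>F. ipair \<theta> p = 0}) (dual_cone P)"
    by (rule face_dual_cone_Int_kernel)
  have "dual_cone P \<inter> dual_cone Q = dual_cone P \<inter> {\<theta>. \<forall>p\<in>F. ipair \<theta> p = 0}"
  proof (intro equalityI subsetI)
    fix \<theta> assume \<theta>: "\<theta> \<in> dual_cone P \<inter> dual_cone Q"
    have "ipair \<theta> p = 0" if "p \<in> F" for p
    proof -
      have "0 \<le> ipair \<theta> p" "0 \<le> ipair \<theta> (- p)"
        using \<theta> that unfolding dual_cone_def F_def by auto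
      then show ?thesis by (simp add: pair_uminus_right)
    qed
    with \<theta> show "\<theta> \<in> dual_cone P \<inter> {\<theta>. \<forall>p\<in>F. ipair \<theta> p = 0}" by blast
  next
    fix \<theta> assume \<theta>: "\<theta> \<in> dual_cone P \<inter> {\<theta>. \<forall>p\<in>F. ipair \<theta> p = 0}"
    have "0 \<le> ipair \<theta> q" if q: "q \<in> Q" for q
    proof (cases "q \<in> P")
      case False
      then obtain p where "p \<in> P" "q = - p" using assms(2) q by blast
      then have "- q \<in> F" using q unfolding F_def by simp
      then have "ipair \<theta> (- q) = 0" using \<theta> by blast
      then show ?thesis by (simp add: pair_uminus_right)
    qed (use \<theta> in \<open>simp add: dual_cone_def\<close>)
    then show "\<theta> \<in> dual_cone P \<inter> dual_cone Q"
      using \<theta> unfolding dual_cone_def by blast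
  qed
  with face show ?thesis by simp
qed

subsection \<open>Cells of a hyperplane arrangement\<close>

definition sign_cell :: "('v::finite \<Rightarrow> int) set \<Rightarrow> ('v \<Rightarrow> real) \<Rightarrow> ('v \<Rightarrow> real) set" where
  "sign_cell N \<theta>\<^sub>0 = {\<theta>. \<forall>n\<in>N. (0 \<le> ipair \<theta>\<^sub>0 n \<longrightarrow> 0 \<le> ipair \<theta> n) \<and> (ipair \<theta>\<^sub>0 n \<le> 0 \<longrightarrow> ipair \<theta> n \<le> 0)}"

definition cell_ineqs :: "('v::finite \<Rightarrow> int) set \<Rightarrow> ('v \<Rightarrow> real) \<Rightarrow> ('v \<Rightarrow> int) set" where
  "cell_ineqs N \<theta>\<^sub>0 = {n\<in>N. 0 \<le> ipair \<theta>\<^sub>0 n} \<union> uminus ` {n\<in>N. ipair \<theta>\<^sub>0 n \<le> 0}"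

lemma sign_cell_eq_dual_cone: "sign_cell N \<theta>\<^sub>0 = dual_cone (cell_ineqs N \<theta>\<^sub>0)"
  unfolding sign_cell_def dual_cone_def cell_ineqs_def
  by (auto simp: pair_uminus_right ball_Un dest!: ball_imageD)

lemma mem_sign_cell_self: "\<theta>\<^sub>0 \<in> sign_cell N \<theta>\<^sub>0"
  unfolding sign_cell_def by auto

lemma cell_ineqs_subset: "cell_ineqs N \<theta> \<subseteq> N \<union> uminus ` N"
  unfolding cell_ineqs_def by auto

lemma subset_cell_ineqs_uminus: "N \<union> uminus ` N \<subseteq> cell_ineqs N \<theta> \<union> uminus ` cell_ineqs N \<theta>"
proof -
  have "n \<in> cell_ineqs N \<theta> \<union> uminus ` cell_ineqs N \<theta> \<and> - n \<in> cell_ineqs N \<theta> \<union> uminus ` cell_ineqs N \<theta>"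
    if "n \<in> N" for n
  proof (cases "0 \<le> ipair \<theta> n")
    case True
    then have "n \<in> cell_ineqs N \<theta>" using that unfolding cell_ineqs_def by simp
    then show ?thesis by blast
  next
    case False
    then have "- n \<in> cell_ineqs N \<theta>" using that unfolding cell_ineqs_def by simp
    then show ?thesis using image_eqI[of n uminus "- n"] by auto
  qed
  then show ?thesis by blast
qed

lemma finite_cell_ineqs: "finite N \<Longrightarrow> finite (cell_ineqs N \<theta>)"
  unfolding cell_ineqs_def by simp

lemma rat_cone_sign_cell: "finite N \<Longrightarrow> rat_cone (sign_cell N \<theta>)"
  unfolding sign_cell_eq_dual_cone by (intro rat_cone_dual_cone finite_cell_ineqs)

lemma closed_sign_cell: "closed (sign_cell N \<theta>)"
  unfolding sign_cell_eq_dual_cone by (rule closed_dual_cone)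

lemma face_sign_cell_Int:
  "finite N \<Longrightarrow> is_face (sign_cell N \<theta>\<^sub>1 \<inter> sign_cell N \<theta>\<^sub>2) (sign_cell N \<theta>\<^sub>1)"
  unfolding sign_cell_eq_dual_cone
  using cell_ineqs_subset subset_cell_ineqs_uminus
  by (intro face_dual_cone_Int finite_cell_ineqs) blast+

lemma finite_sign_cells: "finite N \<Longrightarrow> finite (sign_cell N ` X)"
proof -
  assume "finite N"
  have "sign_cell N ` X \<subseteq> dual_cone ` Pow (N \<union> uminus ` N)"
    using cell_ineqs_subset unfolding sign_cell_eq_dual_cone by blast
  then show ?thesis by (rule finite_subset) (simp add: \<open>finite N\<close>)
qed

definition face_closure :: "('v::finite \<Rightarrow> real) set set \<Rightarrow> ('v \<Rightarrow> real) set set" where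
  "face_closure S = {\<tau>. \<exists>\<sigma>\<in>S. is_face \<tau> \<sigma>}"

lemma Union_face_closure: "\<Union>(face_closure S) = \<Union>S"
  unfolding face_closure_def using face_refl face_subset by blast

lemma face_Int_face:
  assumes "rat_cone \<rho>\<^sub>1" "is_face (\<rho>\<^sub>1 \<inter> \<rho>\<^sub>2) \<rho>\<^sub>1" "is_face \<sigma> \<rho>\<^sub>1" "is_face \<tau> \<rho>\<^sub>2"
  shows "is_face (\<sigma> \<inter> \<tau>) \<sigma>"
proof -
  obtain m where m: "\<forall>\<theta>\<in>\<rho>\<^sub>2. 0 \<le> ipair \<theta> m" "\<tau> = \<rho>\<^sub>2 \<inter> {\<theta>. ipair \<theta> m = 0}"
    using assms(4) unfolding is_face_def by blast
  have "is_face (\<rho>\<^sub>1 \<inter> \<rho>\<^sub>2 \<inter> {\<theta>. ipair \<theta> m = 0}) (\<rho>\<^sub>1 \<inter> \<rho>\<^sub>2)"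
    unfolding is_face_def using m(1) by blast
  then have "is_face (\<rho>\<^sub>1 \<inter> \<rho>\<^sub>2 \<inter> {\<theta>. ipair \<theta> m = 0}) \<rho>\<^sub>1"
    by (rule face_trans[OF assms(1,2)])
  then have "is_face (\<sigma> \<inter> (\<rho>\<^sub>1 \<inter> \<rho>\<^sub>2 \<inter> {\<theta>. ipair \<theta> m = 0})) \<rho>\<^sub>1"
    by (rule face_Int[OF assms(3)])
  moreover have "\<sigma> \<inter> (\<rho>\<^sub>1 \<inter> \<rho>\<^sub>2 \<inter> {\<theta>. ipair \<theta> m = 0}) = \<sigma> \<inter> \<tau>"
    using face_subset[OF assms(3)] m(2) by blast
  ultimately show ?thesis
    using face_of_subset face_subset[OF assms(3)] by (metis Int_lower1)
qed

lemma cone_complex_face_closure: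
  assumes fin: "finite S" and rat: "\<forall>\<sigma>\<in>S. rat_cone \<sigma>"
    and meet: "\<forall>\<sigma>\<in>S. \<forall>\<tau>\<in>S. is_face (\<sigma> \<inter> \<tau>) \<sigma>"
  shows "cone_complex (face_closure S)"
  unfolding cone_complex_def
proof (intro conjI ballI allI impI)
  have "face_closure S = (\<Union>\<sigma>\<in>S. {\<tau>. is_face \<tau> \<sigma>})"
    unfolding face_closure_def by blast
  then show "finite (face_closure S)"
    using fin rat by (simp add: finite_faces)
next
  fix \<sigma> assume "\<sigma> \<in> face_closure S"
  then show "rat_cone \<sigma>"
    using rat rat_cone_face unfolding face_closure_def by blast
next
  fix \<sigma> \<tau> assume "\<sigma> \<in> face_closure S" "is_face \<tau> \<sigma>"
  then show "\<tau> \<in> face_closure S"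
    using rat face_trans unfolding face_closure_def by blast
next
  fix \<sigma> \<tau> assume "\<sigma> \<in> face_closure S" "\<tau> \<in> face_closure S"
  then obtain \<rho>\<^sub>1 \<rho>\<^sub>2 where \<rho>: "\<rho>\<^sub>1 \<in> S" "is_face \<sigma> \<rho>\<^sub>1" "\<rho>\<^sub>2 \<in> S" "is_face \<tau> \<rho>\<^sub>2"
    unfolding face_closure_def by blast
  show "is_face (\<sigma> \<inter> \<tau>) \<sigma>"
    using face_Int_face \<rho> rat meet by blast
  have "is_face (\<tau> \<inter> \<sigma>) \<tau>"
    using face_Int_face \<rho> rat meet by blast
  then show "is_face (\<sigma> \<inter> \<tau>) \<tau>" by (simp add: Int_commute)
qed

subsection \<open>Dimension vectors and semistability\<close>

lemma injective_mat_dim_le: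
  fixes F :: "complex mat"
  assumes F: "F \<in> carrier_mat n m"
    and inj: "\<forall>v\<in>carrier_vec m. F *\<^sub>v v = 0\<^sub>v n \<longrightarrow> v = 0\<^sub>v m"
  shows "m \<le> n"
proof (rule ccontr)
  assume "\<not> m \<le> n"
  then have nm: "n < m" by simp
  define B :: "complex mat" where "B = mat m m (\<lambda>(r, c). if r < n then F $$ (r, c) else 0)"
  have B: "B \<in> carrier_mat m m" unfolding B_def by simp
  have "det B = (\<Sum>j<m. B $$ (n, j) * cofactor B n j)"
    by (rule laplace_expansion_row[OF B nm])
  also have "\<dots> = 0" unfolding B_def using nm by simp
  finally obtain v where v: "v \<in> carrier_vec m" "v \<noteq> 0\<^sub>v m" "B *\<^sub>v v = 0\<^sub>v m"
    using det_0_iff_vec_prod_zero[OF B] by blast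
  have "F *\<^sub>v v = 0\<^sub>v n"
  proof (rule eq_vecI)
    fix r assume "r < dim_vec (0\<^sub>v n :: complex vec)"
    then have r: "r < n" by simp
    have "row B r = row F r"
      using F r nm unfolding B_def by (auto intro!: eq_vecI)
    moreover have "row B r \<bullet> v = 0"
      using v(3) r nm B by (metis dim_mult_mat_vec index_mult_mat_vec index_zero_vec(1) carrier_matD(1) order.strict_trans)
    ultimately show "(F *\<^sub>v v) $ r = (0\<^sub>v n :: complex vec) $ r" using r F by simp
  qed (use F in simp)
  with inj v show False by blast
qed

lemma dim_le_total_dim: "dv E i \<le> total_dim (E :: ('v::finite, 'a) qrep)"
  unfolding total_dim_def by (rule member_le_sum) auto

lemma subobj_dim_le: "subobj Arr src tgt I A E \<Longrightarrow> dv A i \<le> dv E i"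
  unfolding subobj_def is_mor_def injective_mor_def
  by (metis injective_mat_dim_le)

definition dim_box :: "nat \<Rightarrow> ('v::finite \<Rightarrow> int) set" where
  "dim_box k = {n. \<forall>i. 0 \<le> n i \<and> n i \<le> int k}"

lemma finite_dim_box: "finite (dim_box k :: ('v::finite \<Rightarrow> int) set)"
proof -
  have "dim_box k \<subseteq> (Pi\<^sub>E UNIV (\<lambda>_::'v. {0..int k}))"
    unfolding dim_box_def PiE_UNIV_domain by auto
  then show ?thesis by (rule finite_subset) (simp add: finite_PiE)
qed

text \<open>All dimension vectors that enter the semistability of an object of total dimension
  at most \<open>k\<close> lie in \<open>dim_box k\<close>, so only the signs of \<open>\<theta>\<close> on that box matter.\<close>
lemma semistable_sign_cell:
  fixes E :: "('v::finite, 'a) qrep"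
  assumes ss: "semistable Arr src tgt I \<theta> E" and "total_dim E \<le> k"
    and cell: "\<theta>' \<in> sign_cell (dim_box k) \<theta>"
  shows "semistable Arr src tgt I \<theta>' E"
proof -
  have box: "(\<lambda>i. int (dv A i)) \<in> dim_box k" if "\<forall>i. dv A i \<le> dv E i" for A :: "('v, 'a) qrep"
  proof -
    have "dv A i \<le> k" for i
      using that dim_le_total_dim[of E i] \<open>total_dim E \<le> k\<close> by (meson le_trans)
    then show ?thesis unfolding dim_box_def by simp
  qed
  have signs: "(0 \<le> pair \<theta> (\<lambda>i. real (dv A i)) \<longrightarrow> 0 \<le> pair \<theta>' (\<lambda>i. real (dv A i))) \<and>
      (pair \<theta> (\<lambda>i. real (dv A i)) \<le> 0 \<longrightarrow> pair \<theta>' (\<lambda>i. real (dv A i)) \<le> 0)"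
    if "\<forall>i. dv A i \<le> dv E i" for A :: "('v, 'a) qrep"
    using cell box[OF that] unfolding sign_cell_def by fastforce
  show ?thesis
    unfolding semistable_def
  proof (intro conjI allI impI)
    show "pair \<theta>' (\<lambda>i. real (dv E i)) = 0"
      using ss signs[of E] unfolding semistable_def by simp
  next
    fix A assume A: "subobj Arr src tgt I A E"
    then have "\<forall>i. dv A i \<le> dv E i" by (blast intro: subobj_dim_le)
    with signs[of A] ss A show "pair \<theta>' (\<lambda>i. real (dv A i)) \<le> 0"
      unfolding semistable_def by blast
  qed
qed

lemma wall_set_eq_Union_sign_cells:
  fixes src tgt :: "'a \<Rightarrow> 'v::finite"
  shows "wall_set Arr src tgt I k = \<Union>(sign_cell (dim_box k) ` wall_set Arr src tgt I k)"
proof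
  show "wall_set Arr src tgt I k \<subseteq> \<Union>(sign_cell (dim_box k) ` wall_set Arr src tgt I k)"
    using mem_sign_cell_self by blast
next
  show "\<Union>(sign_cell (dim_box k) ` wall_set Arr src tgt I k) \<subseteq> wall_set Arr src tgt I k"
  proof
    fix \<theta>' assume "\<theta>' \<in> \<Union>(sign_cell (dim_box k) ` wall_set Arr src tgt I k)"
    then obtain \<theta> where \<theta>: "\<theta> \<in> wall_set Arr src tgt I k" and \<theta>': "\<theta>' \<in> sign_cell (dim_box k) \<theta>"
      by blast
    from \<theta> obtain E :: "('v, 'a) qrep" where E: "objA Arr src tgt I E" "total_dim E \<noteq> 0"
      "total_dim E \<le> k" "semistable Arr src tgt I \<theta> E"
      unfolding wall_set_def by blast
    have "semistable Arr src tgt I \<theta>' E"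
      by (rule semistable_sign_cell[OF E(4,3) \<theta>'])
    with E(1-3) show "\<theta>' \<in> wall_set Arr src tgt I k"
      unfolding wall_set_def by blast
  qed
qed

theorem mainTheorem5:
  fixes Arr :: "'a set" and src tgt :: "'a \<Rightarrow> 'v::finite"
    and I :: "('v \<times> 'a list \<Rightarrow> complex) set" and k :: nat
  assumes "finite Arr"
    and "admissible_ideal Arr src tgt I"
    and "1 \<le> k"
  shows "(\<exists>S. cone_complex S \<and> \<Union>S = wall_set Arr src tgt I k) \<and>
         closed (wall_set Arr src tgt I k)"
proof -
  define W where "W = wall_set Arr src tgt I k"
  define S where "S = sign_cell (dim_box k) ` W"
  have W: "W = \<Union>S"
    unfolding W_def S_def by (rule wall_set_eq_Union_sign_cells)
  have "finite S"
    unfolding S_def by (intro finite_sign_cells finite_dim_box)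
  moreover have "\<forall>\<sigma>\<in>S. rat_cone \<sigma>" "\<forall>\<sigma>\<in>S. \<forall>\<tau>\<in>S. is_face (\<sigma> \<inter> \<tau>) \<sigma>"
    unfolding S_def by (simp_all add: rat_cone_sign_cell face_sign_cell_Int finite_dim_box)
  ultimately have "cone_complex (face_closure S)"
    by (rule cone_complex_face_closure)
  moreover have "\<Union>(face_closure S) = W"
    unfolding W by (rule Union_face_closure)
  moreover have "closed W"
    unfolding W using \<open>finite S\<close> by (rule closed_Union) (simp add: S_def closed_sign_cell)
  ultimately show ?thesis
    unfolding W_def[symmetric] by (intro conjI exI[of _ "face_closure S"])
qed

end
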